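(* Let $\mathcal T$ be a locally finite partial tessellation of ${\mathbb X}$, let $T_1,T_2$ be tiles of $\mathcal T$, and suppose $S=T_1\cap T_2$ has codimension 1. Let $H$ be the hyperplane generated by $S$. Then: (1) $H$ is an essential hyperplane of both $T_1$ and $T_2$; (2) $T_1$ and $T_2$ are contained in different closed half-spaces bounded by $H$; (3) $S^r\cap T=\emptyset$ for every tile $T$ different from $T_1$ and $T_2$; (4) $S$ is a side of $\mathcal T$.
   Context: ${\mathbb X}$ is $\mathbb R^n$, the unit sphere $\mathbb S^n$, or hyperbolic $n$-space. A subspace is a complete totally geodesic submanifold, a hyperplane one of codimension 1; closed half-spaces are closures of the two components of the complement of a hyperplane; the hyperplane generated by a set is the smallest subspace containing it (when that has codimension 1). A polyhedron is a nonempty intersection of a family of closed half-spaces whose boundary hyperplanes form a locally finite family; its codimension is that of the subspace it generates and $S^r$ is its interior in that subspace; it is thick if it has nonempty interior in ${\mathbb X}$. For a thick polyhedron $P$, a closed half-space $Z$ is essential if $P\subseteq Z$ and $P\cap\partial Z$ has nonempty interior in $\partial Z$; then $\partial Z$ is an essential hyperplane of $P$. A partial tessellation is a set of thick polyhedra (tiles) with pairwise disjoint interiors; locally finite means every compact set meets only finitely many tiles. A cell is a nonempty intersection $C$ of tiles such that for every tile $T$ either $C\subseteq T$ or $C^r\cap T=\emptyset$; a side is a cell of codimension 1. *)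

theory Defs
  imports "HOL-Analysis.Analysis"
begin

text \<open>The space X is realised inside an ambient Euclidean space of dimension n+1
  (type 'a with DIM('a) = n+1), with a fixed unit vector e:
  Euclidean n-space as the affine hyperplane x.e = 1, the unit sphere S^n,
  and hyperbolic n-space as the upper sheet of the hyperboloid
  |y|^2 - t^2 = -1 (t = x.e, y the component orthogonal to e).
  In all three models the subspaces (complete totally geodesic submanifolds)
  are exactly the nonempty intersections of X with linear subspaces.\<close>

datatype geom = Euc | Sph | Hyp

fun model :: "geom \<Rightarrow> 'a::euclidean_space \<Rightarrow> 'a set" where
  "model Euc e = {x. x \<bullet> e = 1}"
| "model Sph e = sphere 0 1"
| "model Hyp e = {x. x \<bullet> x - 2 * (x \<bullet> e)^2 = -1 \<and> x \<bullet> e > 0}"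

definition amb_dim :: "'a::euclidean_space itself \<Rightarrow> nat" where
  "amb_dim _ = DIM('a) - 1"

definition gsubspace :: "geom \<Rightarrow> 'a::euclidean_space \<Rightarrow> 'a set \<Rightarrow> bool" where
  "gsubspace g e M \<longleftrightarrow> M \<noteq> {} \<and> (\<exists>L. subspace L \<and> M = model g e \<inter> L)"

definition gdim :: "'a::euclidean_space set \<Rightarrow> nat" where
  "gdim M = dim (span M) - 1"

definition gcodim :: "'a::euclidean_space set \<Rightarrow> nat" where
  "gcodim M = amb_dim TYPE('a) - gdim M"

definition ghyperplane :: "geom \<Rightarrow> 'a::euclidean_space \<Rightarrow> 'a set \<Rightarrow> bool" where
  "ghyperplane g e H \<longleftrightarrow> gsubspace g e H \<and> gcodim H = 1"

definition gspan :: "geom \<Rightarrow> 'a::euclidean_space \<Rightarrow> 'a set \<Rightarrow> 'a set" where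
  "gspan g e A = \<Inter>{M. gsubspace g e M \<and> A \<subseteq> M}"

definition set_codim :: "geom \<Rightarrow> 'a::euclidean_space \<Rightarrow> 'a set \<Rightarrow> nat" where
  "set_codim g e P = gcodim (gspan g e P)"

definition relint_g :: "geom \<Rightarrow> 'a::euclidean_space \<Rightarrow> 'a set \<Rightarrow> 'a set" where
  "relint_g g e P = (top_of_set (gspan g e P)) interior_of P"

definition int_X :: "geom \<Rightarrow> 'a::euclidean_space \<Rightarrow> 'a set \<Rightarrow> 'a set" where
  "int_X g e P = (top_of_set (model g e)) interior_of P"

definition halfspace_of :: "geom \<Rightarrow> 'a::euclidean_space \<Rightarrow> 'a set \<Rightarrow> 'a set \<Rightarrow> bool" where
  "halfspace_of g e H Z \<longleftrightarrow> ghyperplane g e H \<and>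
     (\<exists>c \<in> model g e - H. Z = closure (connected_component_set (model g e - H) c))"

definition locfin_family :: "geom \<Rightarrow> 'a::euclidean_space \<Rightarrow> 'a set set \<Rightarrow> bool" where
  "locfin_family g e Fs \<longleftrightarrow>
     (\<forall>x \<in> model g e. \<exists>\<epsilon>>0. finite {A \<in> Fs. A \<inter> ball x \<epsilon> \<noteq> {}})"

definition polyhedron_g :: "geom \<Rightarrow> 'a::euclidean_space \<Rightarrow> 'a set \<Rightarrow> bool" where
  "polyhedron_g g e P \<longleftrightarrow> P \<noteq> {} \<and>
     (\<exists>F. (\<forall>(H, Z) \<in> F. halfspace_of g e H Z) \<and> locfin_family g e (fst ` F) \<and>
          P = model g e \<inter> \<Inter>(snd ` F))"

definition thick :: "geom \<Rightarrow> 'a::euclidean_space \<Rightarrow> 'a set \<Rightarrow> bool" where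
  "thick g e P \<longleftrightarrow> polyhedron_g g e P \<and> int_X g e P \<noteq> {}"

definition essential_hyperplane :: "geom \<Rightarrow> 'a::euclidean_space \<Rightarrow> 'a set \<Rightarrow> 'a set \<Rightarrow> bool" where
  "essential_hyperplane g e P H \<longleftrightarrow>
     (\<exists>Z. halfspace_of g e H Z \<and> P \<subseteq> Z \<and> (top_of_set H) interior_of (P \<inter> H) \<noteq> {})"

definition partial_tessellation :: "geom \<Rightarrow> 'a::euclidean_space \<Rightarrow> 'a set set \<Rightarrow> bool" where
  "partial_tessellation g e \<T> \<longleftrightarrow> (\<forall>T \<in> \<T>. thick g e T) \<and>
     (\<forall>T1 \<in> \<T>. \<forall>T2 \<in> \<T>. T1 \<noteq> T2 \<longrightarrow> int_X g e T1 \<inter> int_X g e T2 = {})"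

definition locally_finite_tess :: "geom \<Rightarrow> 'a::euclidean_space \<Rightarrow> 'a set set \<Rightarrow> bool" where
  "locally_finite_tess g e \<T> \<longleftrightarrow>
     (\<forall>K. compact K \<and> K \<subseteq> model g e \<longrightarrow> finite {T \<in> \<T>. T \<inter> K \<noteq> {}})"

definition cell :: "geom \<Rightarrow> 'a::euclidean_space \<Rightarrow> 'a set set \<Rightarrow> 'a set \<Rightarrow> bool" where
  "cell g e \<T> C \<longleftrightarrow> C \<noteq> {} \<and> (\<exists>\<S>. \<S> \<noteq> {} \<and> \<S> \<subseteq> \<T> \<and> C = \<Inter>\<S>) \<and>
     (\<forall>T \<in> \<T>. C \<subseteq> T \<or> relint_g g e C \<inter> T = {})"

definition side :: "geom \<Rightarrow> 'a::euclidean_space \<Rightarrow> 'a set set \<Rightarrow> 'a set \<Rightarrow> bool" where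
  "side g e \<T> C \<longleftrightarrow> cell g e \<T> C \<and> set_codim g e C = 1"

end

(*
  In the model X \<subseteq> R^(n+1), subspaces, hyperplanes and closed half-spaces of X are the traces
  of linear subspaces, of hyperplanes {a \<bullet> x = 0} and of half-spaces {0 \<le> a \<bullet> x}; rescaling
  along rays from the origin maps an open cone around X continuously onto X and preserves the
  sign of every linear functional, which transports convexity and local arguments to X.

  Let S = T1 \<inter> T2 span the hyperplane {a \<bullet> x = 0}. The rescaled sum p of a basis of span S
  chosen inside S is a point of S at which every half-space containing S and having p on its
  boundary is bounded by that hyperplane. Since each tile is cut out by a locally finite family
  of half-spaces, near p each of T1, T2 contains the half-ball on every side of the hyperplane
  whose opposite closed half-space does not contain the whole tile. Disjointness of interiors
  forbids a common half-ball, so T1 and T2 lie in opposite half-spaces and together contain a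
  neighbourhood of p in the hyperplane. The same local picture holds at every point of the
  relative interior of S, where T1 and T2 then fill a neighbourhood in X; a third tile, whose
  interior is dense in it, cannot reach such a point.
*)
theory Submission
  imports Defs
begin

abbreviation model_hyperplane :: "geom \<Rightarrow> 'a::euclidean_space \<Rightarrow> 'a \<Rightarrow> 'a set" where
  "model_hyperplane g e a \<equiv> model g e \<inter> {x. a \<bullet> x = 0}"

abbreviation model_halfspace :: "geom \<Rightarrow> 'a::euclidean_space \<Rightarrow> 'a \<Rightarrow> 'a set" where
  "model_halfspace g e a \<equiv> model g e \<inter> {x. 0 \<le> a \<bullet> x}"

definition model_cone :: "geom \<Rightarrow> 'a::euclidean_space \<Rightarrow> 'a set" where
  "model_cone g e = (case g of
      Euc \<Rightarrow> {x. 0 < x \<bullet> e}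
    | Sph \<Rightarrow> - {0}
    | Hyp \<Rightarrow> {x. norm x < sqrt 2 * (x \<bullet> e)})"

definition model_gauge :: "geom \<Rightarrow> 'a::euclidean_space \<Rightarrow> 'a \<Rightarrow> real" where
  "model_gauge g e x = (case g of
      Euc \<Rightarrow> x \<bullet> e
    | Sph \<Rightarrow> norm x
    | Hyp \<Rightarrow> sqrt (2 * (x \<bullet> e)\<^sup>2 - x \<bullet> x))"

definition radial_proj :: "geom \<Rightarrow> 'a::euclidean_space \<Rightarrow> 'a \<Rightarrow> 'a" where
  "radial_proj g e x = x /\<^sub>R model_gauge g e x"

lemma mem_model_cone_Hyp: "x \<in> model_cone Hyp e \<longleftrightarrow> 0 < x \<bullet> e \<and> x \<bullet> x < 2 * (x \<bullet> e)\<^sup>2"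
  by (simp add: model_cone_def norm_lt_square power_mult_distrib zero_less_mult_iff)

lemma model_gauge_pos: "x \<in> model_cone g e \<Longrightarrow> 0 < model_gauge g e x"
proof (cases g)
  case Hyp
  then show "x \<in> model_cone g e \<Longrightarrow> ?thesis" by (simp add: mem_model_cone_Hyp model_gauge_def)
qed (auto simp: model_cone_def model_gauge_def)

lemma open_model_cone: "open (model_cone g e)"
  by (cases g) (auto simp: model_cone_def intro!: open_Collect_less continuous_intros)

lemma continuous_on_radial_proj: "continuous_on (model_cone g e) (radial_proj g e)"
proof -
  have "continuous_on (model_cone g e) (model_gauge g e)"
    by (cases g) (auto simp: model_gauge_def intro!: continuous_intros)
  then show ?thesis
    unfolding radial_proj_def by (intro continuous_intros) (auto dest: model_gauge_pos)
qed

lemma model_subset_model_cone: "model g e \<subseteq> model_cone g e"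
proof (cases g)
  case Hyp
  then show ?thesis by (auto simp: mem_model_cone_Hyp)
qed (auto simp: model_cone_def)

lemma model_gauge_model:
  assumes "x \<in> model g e"
  shows "model_gauge g e x = 1"
proof (cases g)
  case Hyp
  then have "2 * (x \<bullet> e)\<^sup>2 - x \<bullet> x = 1"
    using assms by simp
  then show ?thesis using Hyp by (simp add: model_gauge_def)
qed (use assms in \<open>auto simp: model_gauge_def\<close>)

lemma radial_proj_model: "x \<in> model g e \<Longrightarrow> radial_proj g e x = x"
  by (simp add: radial_proj_def model_gauge_model)

lemma radial_proj_in_model:
  assumes "x \<in> model_cone g e"
  shows "radial_proj g e x \<in> model g e"
proof (cases g)
  case Hyp
  define s where "s = model_gauge g e x"
  have s: "0 < s" "s\<^sup>2 = 2 * (x \<bullet> e)\<^sup>2 - x \<bullet> x" "0 < x \<bullet> e"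
    using assms model_gauge_pos[OF assms] Hyp by (auto simp: s_def model_gauge_def mem_model_cone_Hyp)
  have "(x /\<^sub>R s) \<bullet> (x /\<^sub>R s) - 2 * ((x /\<^sub>R s) \<bullet> e)\<^sup>2 = (x \<bullet> x - 2 * (x \<bullet> e)\<^sup>2) / s\<^sup>2"
    by (simp add: power2_eq_square divide_inverse algebra_simps)
  also have "\<dots> = - s\<^sup>2 / s\<^sup>2"
    using s(2) by simp
  also have "\<dots> = -1"
    using s(1) by simp
  finally show ?thesis
    using s Hyp by (simp add: radial_proj_def s_def)
qed (use assms in \<open>auto simp: model_cone_def radial_proj_def model_gauge_def\<close>)

lemma inner_radial_proj_sign:
  assumes "x \<in> model_cone g e"
  shows "0 < a \<bullet> radial_proj g e x \<longleftrightarrow> 0 < a \<bullet> x"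
    and "0 \<le> a \<bullet> radial_proj g e x \<longleftrightarrow> 0 \<le> a \<bullet> x"
    and "a \<bullet> radial_proj g e x = 0 \<longleftrightarrow> a \<bullet> x = 0"
  using model_gauge_pos[OF assms]
  by (simp_all add: radial_proj_def zero_less_mult_iff zero_le_mult_iff)

lemma zero_notin_model: "0 \<notin> model g e"
  by (cases g) auto

lemma closed_model: "closed (model g e)"
proof (cases g)
  case Hyp
  have "model g e = {x. x \<bullet> x - 2 * (x \<bullet> e)\<^sup>2 = -1} \<inter> {x. 0 \<le> x \<bullet> e}"
    using Hyp by (auto simp: order_le_less) (smt (verit) inner_ge_zero zero_power2)
  then show ?thesis
    by (simp add: closed_Int closed_Collect_eq closed_Collect_le continuous_intros)
qed (auto simp: closed_Collect_eq continuous_intros)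

lemma convex_model_cone_Int_halfspace: "convex (model_cone g e \<inter> {x. 0 < a \<bullet> x})"
proof (cases g)
  case Sph
  then have "model_cone g e \<inter> {x. 0 < a \<bullet> x} = {x. 0 < a \<bullet> x}"
    by (auto simp: model_cone_def)
  then show ?thesis by (simp add: convex_halfspace_gt)
next
  case Hyp
  have "convex (model_cone Hyp e)"
    unfolding convex_def
  proof (intro ballI allI impI)
    fix x y and u v :: real
    assume "x \<in> model_cone Hyp e" "y \<in> model_cone Hyp e" "0 \<le> u" "0 \<le> v" "u + v = 1"
    then have x: "norm x < sqrt 2 * (x \<bullet> e)" and y: "norm y < sqrt 2 * (y \<bullet> e)"
      and uv: "0 \<le> u" "0 \<le> v" "u + v = 1"
      by (auto simp: model_cone_def)
    have "norm (u *\<^sub>R x + v *\<^sub>R y) \<le> u * norm x + v * norm y"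
      using norm_triangle_ineq[of "u *\<^sub>R x" "v *\<^sub>R y"] uv by simp
    also have "\<dots> < u * (sqrt 2 * (x \<bullet> e)) + v * (sqrt 2 * (y \<bullet> e))"
    proof (cases "u = 0")
      case False
      then have "u * norm x < u * (sqrt 2 * (x \<bullet> e))"
        using x uv by simp
      moreover have "v * norm y \<le> v * (sqrt 2 * (y \<bullet> e))"
        using y uv by (simp add: mult_left_mono)
      ultimately show ?thesis by linarith
    qed (use y uv in simp)
    also have "\<dots> = sqrt 2 * ((u *\<^sub>R x + v *\<^sub>R y) \<bullet> e)"
      by (simp add: inner_add_left algebra_simps)
    finally have "norm (u *\<^sub>R x + v *\<^sub>R y) < sqrt 2 * ((u *\<^sub>R x + v *\<^sub>R y) \<bullet> e)" .
    then show "u *\<^sub>R x + v *\<^sub>R y \<in> model_cone Hyp e"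
      by (simp add: model_cone_def)
  qed
  then show ?thesis using Hyp by (simp add: convex_Int convex_halfspace_gt)
next
  case Euc
  have "{x. 0 < x \<bullet> e} = {x. 0 < e \<bullet> x}"
    by (simp add: inner_commute)
  then show ?thesis using Euc by (simp add: model_cone_def convex_Int convex_halfspace_gt)
qed

lemma sum_in_model_cone:
  assumes "finite B" "B \<noteq> {}" "B \<subseteq> model g e" "independent B"
  shows "\<Sum>B \<in> model_cone g e"
proof (cases g)
  case Euc
  have "(\<Sum>B) \<bullet> e = (\<Sum>b\<in>B. 1)"
    unfolding inner_sum_left using assms(3) Euc by (intro sum.cong) auto
  then show ?thesis
    using Euc assms(1,2) by (simp add: model_cone_def card_gt_0_iff)
next
  case Sph
  have "(\<Sum>b\<in>B. 1 *\<^sub>R b) \<noteq> 0"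
    using assms(1,2,4) dependent_finite[OF assms(1)] by auto
  then show ?thesis using Sph by (simp add: model_cone_def)
next
  case Hyp
  have "norm (\<Sum>B) \<le> (\<Sum>b\<in>B. norm b)"
    by (rule norm_sum)
  also have "\<dots> < (\<Sum>b\<in>B. sqrt 2 * (b \<bullet> e))"
    using assms(1-3) model_subset_model_cone[of Hyp e] Hyp
    by (intro sum_strict_mono) (auto simp: model_cone_def)
  also have "\<dots> = sqrt 2 * ((\<Sum>B) \<bullet> e)"
    by (simp add: inner_sum_left sum_distrib_left)
  finally show ?thesis using Hyp by (simp add: model_cone_def)
qed

lemma radial_proj_near:
  assumes "x \<in> model g e" "open W" "x \<in> W"
  obtains \<epsilon> where "0 < \<epsilon>"
    "\<And>z. dist z x < \<epsilon> \<Longrightarrow> z \<in> model_cone g e \<and> radial_proj g e z \<in> W"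
proof -
  have "open (model_cone g e \<inter> radial_proj g e -` W)"
    by (intro continuous_open_preimage continuous_on_radial_proj open_model_cone assms(2))
  moreover have "x \<in> model_cone g e \<inter> radial_proj g e -` W"
    using assms model_subset_model_cone by (auto simp: radial_proj_model)
  ultimately obtain \<epsilon> where "0 < \<epsilon>" "ball x \<epsilon> \<subseteq> model_cone g e \<inter> radial_proj g e -` W"
    by (meson open_contains_ball)
  then show ?thesis
    by (intro that[of \<epsilon>]) (auto simp: dist_commute subset_eq)
qed

lemma radial_proj_line:
  assumes "x \<in> model g e" "open W" "x \<in> W"
  obtains t where "0 < t"
    "\<And>s. \<bar>s\<bar> \<le> t \<Longrightarrow> x + s *\<^sub>R v \<in> model_cone g e \<and> radial_proj g e (x + s *\<^sub>R v) \<in> W"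
proof -
  obtain \<epsilon> where \<epsilon>: "0 < \<epsilon>"
    "\<And>z. dist z x < \<epsilon> \<Longrightarrow> z \<in> model_cone g e \<and> radial_proj g e z \<in> W"
    using radial_proj_near[OF assms] by blast
  define t where "t = \<epsilon> / (norm v + 1)"
  have t: "0 < t" "t * norm v < \<epsilon>"
    using \<epsilon>(1) by (auto simp: t_def field_simps add_pos_nonneg)
  have "dist (x + s *\<^sub>R v) x < \<epsilon>" if "\<bar>s\<bar> \<le> t" for s
  proof -
    have "\<bar>s\<bar> * norm v \<le> t * norm v"
      using that by (simp add: mult_right_mono)
    then show ?thesis using t by (simp add: dist_norm)
  qed
  then show ?thesis
    using \<epsilon>(2) t(1) by (intro that[of t]) auto
qed

lemma open_meets_positive_side:
  assumes "x \<in> model g e" "a \<bullet> x = 0" "a \<noteq> 0" "open W" "x \<in> W"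
  shows "\<exists>y \<in> model g e \<inter> W. 0 < a \<bullet> y"
proof -
  obtain t where t: "0 < t"
    "\<And>s. \<bar>s\<bar> \<le> t \<Longrightarrow> x + s *\<^sub>R a \<in> model_cone g e \<and> radial_proj g e (x + s *\<^sub>R a) \<in> W"
    using radial_proj_line[OF assms(1,4,5)] by blast
  have "0 < a \<bullet> (x + t *\<^sub>R a)"
    using assms(2,3) t(1) by (simp add: inner_add_right)
  then show ?thesis
    using t(1) t(2)[of t]
    by (intro bexI[of _ "radial_proj g e (x + t *\<^sub>R a)"])
      (auto simp: inner_radial_proj_sign radial_proj_in_model)
qed

lemma openin_model_meets_off_hyperplane:
  assumes "openin (top_of_set (model g e)) V" "x \<in> V" "a \<noteq> 0"
  shows "\<exists>y \<in> V. a \<bullet> y \<noteq> 0"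
proof (cases "a \<bullet> x = 0")
  case True
  obtain W where "open W" "V = model g e \<inter> W"
    using assms(1) openin_open by blast
  then show ?thesis
    using open_meets_positive_side[of x g e a W] assms True by force
qed (use assms(2) in blast)

lemma connected_model_Int_halfspace: "connected (model g e \<inter> {x. 0 < a \<bullet> x})"
proof -
  have "radial_proj g e ` (model_cone g e \<inter> {x. 0 < a \<bullet> x}) = model g e \<inter> {x. 0 < a \<bullet> x}"
    using model_subset_model_cone[of g e]
    by (force simp: inner_radial_proj_sign radial_proj_in_model radial_proj_model image_iff)
  moreover have "connected (radial_proj g e ` (model_cone g e \<inter> {x. 0 < a \<bullet> x}))"
    by (intro connected_continuous_image convex_connected convex_model_cone_Int_halfspace
        continuous_on_subset[OF continuous_on_radial_proj]) auto
  ultimately show ?thesis by simp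
qed

lemma closure_model_Int_halfspace:
  assumes "a \<noteq> 0"
  shows "closure (model g e \<inter> {x. 0 < a \<bullet> x}) = model_halfspace g e a"
proof
  show "closure (model g e \<inter> {x. 0 < a \<bullet> x}) \<subseteq> model_halfspace g e a"
    by (intro closure_minimal closed_Int closed_model closed_Collect_le continuous_intros) auto
  show "model_halfspace g e a \<subseteq> closure (model g e \<inter> {x. 0 < a \<bullet> x})"
  proof
    fix x assume x: "x \<in> model_halfspace g e a"
    show "x \<in> closure (model g e \<inter> {x. 0 < a \<bullet> x})"
    proof (cases "a \<bullet> x = 0")
      case True
      show ?thesis unfolding closure_approachable
      proof (intro allI impI)
        fix r :: real assume "0 < r"
        then show "\<exists>y \<in> model g e \<inter> {x. 0 < a \<bullet> x}. dist y x < r"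
          using open_meets_positive_side[of x g e a "ball x r"] x True assms
          by (auto simp: dist_commute)
      qed
    qed (use x closure_subset in fastforce)
  qed
qed

lemma connected_component_model_minus_hyperplane:
  assumes "c \<in> model g e" "0 < a \<bullet> c"
  shows "connected_component_set (model g e - model_hyperplane g e a) c = model g e \<inter> {x. 0 < a \<bullet> x}"
proof
  show "model g e \<inter> {x. 0 < a \<bullet> x} \<subseteq> connected_component_set (model g e - model_hyperplane g e a) c"
    using assms connected_model_Int_halfspace by (intro connected_component_maximal) auto
next
  let ?C = "connected_component_set (model g e - model_hyperplane g e a) c"
  have C: "?C \<subseteq> model g e - model_hyperplane g e a" "connected ?C" "c \<in> ?C"
    using assms by (auto simp: connected_component_subset)
  show "?C \<subseteq> model g e \<inter> {x. 0 < a \<bullet> x}"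
  proof
    fix y assume y: "y \<in> ?C"
    have "0 < a \<bullet> y"
    proof (rule ccontr)
      assume "\<not> 0 < a \<bullet> y"
      then obtain z where "z \<in> ?C" "a \<bullet> z = 0"
        using connected_ivt_hyperplane[OF C(2) y C(3), of a 0] assms by auto
      then show False using C(1) by auto
    qed
    then show "y \<in> model g e \<inter> {x. 0 < a \<bullet> x}"
      using y C(1) by auto
  qed
qed

lemma ghyperplane_normal:
  assumes "ghyperplane g e H"
  obtains a where "a \<noteq> 0" "H = model_hyperplane g e a" "span H = {x. a \<bullet> x = 0}"
proof -
  obtain L where L: "subspace L" "H = model g e \<inter> L" "H \<noteq> {}"
    using assms unfolding ghyperplane_def gsubspace_def by blast
  then have "span H \<subseteq> L"
    by (intro span_minimal) auto
  then have H: "H = model g e \<inter> span H"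
    using L span_superset[of H] by auto
  have "dim H \<noteq> 0"
    using L zero_notin_model[of g e] dim_eq_0[of H] by auto
  moreover have "dim H \<le> DIM('a)"
    using dim_subset_UNIV[of H] by simp
  moreover have "DIM('a) - 1 - (dim H - 1) = 1"
    using assms by (simp add: ghyperplane_def gcodim_def gdim_def amb_dim_def)
  ultimately have d: "dim H = DIM('a) - 1" "dim H < DIM('a)"
    by arith+
  obtain a :: 'a where a: "a \<noteq> 0" "span H \<subseteq> {x. a \<bullet> x = 0}"
    using lowdim_subset_hyperplane[OF d(2)] by blast
  have "span H = {x. a \<bullet> x = 0}"
    using a d dim_hyperplane[OF a(1)] subspace_hyperplane by (intro subspace_dim_equal) auto
  then show ?thesis
    using a H that by auto
qed

lemma halfspace_of_iff:
  "halfspace_of g e H Z \<longleftrightarrow>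
     ghyperplane g e H \<and> (\<exists>a. a \<noteq> 0 \<and> H = model_hyperplane g e a \<and> Z = model_halfspace g e a)"
proof
  assume "halfspace_of g e H Z"
  then obtain c where hyp: "ghyperplane g e H" and c: "c \<in> model g e - H"
    and Z: "Z = closure (connected_component_set (model g e - H) c)"
    unfolding halfspace_of_def by blast
  obtain a where a: "a \<noteq> 0" "H = model_hyperplane g e a"
    using ghyperplane_normal[OF hyp] by blast
  have "\<exists>b. b \<noteq> 0 \<and> H = model_hyperplane g e b \<and> 0 < b \<bullet> c"
  proof (cases "0 < a \<bullet> c")
    case False
    then have "0 < (- a) \<bullet> c"
      using a c by auto
    then show ?thesis
      using a by (intro exI[of _ "- a"]) auto
  qed (use a in blast)
  then obtain b where b: "b \<noteq> 0" "H = model_hyperplane g e b" "0 < b \<bullet> c"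
    by blast
  then have "Z = model_halfspace g e b"
    using c Z connected_component_model_minus_hyperplane[of c g e b] closure_model_Int_halfspace
    by simp
  then show "ghyperplane g e H \<and> (\<exists>a. a \<noteq> 0 \<and> H = model_hyperplane g e a \<and> Z = model_halfspace g e a)"
    using hyp b by blast
next
  assume "ghyperplane g e H \<and> (\<exists>a. a \<noteq> 0 \<and> H = model_hyperplane g e a \<and> Z = model_halfspace g e a)"
  then obtain a where hyp: "ghyperplane g e H" and a: "a \<noteq> 0" "H = model_hyperplane g e a"
    and Z: "Z = model_halfspace g e a"
    by blast
  obtain x where "x \<in> H"
    using hyp unfolding ghyperplane_def gsubspace_def by blast
  then obtain c where c: "c \<in> model g e" "0 < a \<bullet> c"
    using open_meets_positive_side[of x g e a UNIV] a by auto
  show "halfspace_of g e H Z"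
    unfolding halfspace_of_def using hyp c a Z
      connected_component_model_minus_hyperplane[OF c] closure_model_Int_halfspace[OF a(1)]
    by (intro conjI bexI[of _ c]) auto
qed

lemma gspan_eq_model_Int_span:
  assumes "S \<noteq> {}" "S \<subseteq> model g e"
  shows "gspan g e S = model g e \<inter> span S"
proof
  have "gsubspace g e (model g e \<inter> span S)"
    unfolding gsubspace_def using assms span_superset[of S] by (intro conjI exI[of _ "span S"]) auto
  then show "gspan g e S \<subseteq> model g e \<inter> span S"
    unfolding gspan_def using assms span_superset[of S] by auto
  show "model g e \<inter> span S \<subseteq> gspan g e S"
    unfolding gspan_def gsubspace_def by (auto intro: span_minimal[THEN subsetD])
qed

lemma set_codim_eq_1_normal:
  assumes "S \<noteq> {}" "S \<subseteq> model g e" "set_codim g e S = 1"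
  obtains a where "ghyperplane g e (gspan g e S)" "a \<noteq> 0"
    "gspan g e S = model_hyperplane g e a" "span S = {x. a \<bullet> x = 0}"
proof -
  have gs: "gspan g e S = model g e \<inter> span S"
    using gspan_eq_model_Int_span[OF assms(1,2)] .
  have hyp: "ghyperplane g e (gspan g e S)"
    unfolding ghyperplane_def gsubspace_def
    using assms span_superset[of S] by (auto simp: gs set_codim_def intro!: exI[of _ "span S"])
  have "span (gspan g e S) = span S"
    unfolding gs span_eq using assms(2) span_superset[of S] by (auto intro: span_base)
  then show ?thesis
    using ghyperplane_normal[OF hyp] that hyp by metis
qed

lemma normal_vanishes_if_locally_supporting:
  assumes "x \<in> model_hyperplane g e a" "n \<bullet> x = 0" "open W" "x \<in> W"
    and "model_hyperplane g e a \<inter> W \<subseteq> model_halfspace g e n" and "a \<bullet> v = 0"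
  shows "n \<bullet> v = 0"
proof -
  obtain t where t: "0 < t"
    "\<And>s. \<bar>s\<bar> \<le> t \<Longrightarrow> x + s *\<^sub>R v \<in> model_cone g e \<and> radial_proj g e (x + s *\<^sub>R v) \<in> W"
    using radial_proj_line[of x g e W v] assms(1,3,4) by blast
  have "0 \<le> s * (n \<bullet> v)" if "\<bar>s\<bar> = t" for s
  proof -
    let ?z = "x + s *\<^sub>R v"
    have z: "?z \<in> model_cone g e" "radial_proj g e ?z \<in> W"
      using t(2) that by auto
    have "a \<bullet> ?z = 0"
      using assms(1,6) by (simp add: inner_add_right)
    then have "radial_proj g e ?z \<in> model_hyperplane g e a \<inter> W"
      using z by (simp add: radial_proj_in_model inner_radial_proj_sign)
    then have "0 \<le> n \<bullet> ?z"
      using assms(5) z(1) by (auto simp: inner_radial_proj_sign)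
    then show ?thesis
      using assms(2) by (simp add: inner_add_right)
  qed
  from this[of t] this[of "- t"] show ?thesis
    using t(1) by (simp add: zero_le_mult_iff mult_le_0_iff)
qed

lemma model_halfspace_eq_if_normal_parallel:
  assumes "a \<noteq> 0" "n \<noteq> 0" "\<And>v. a \<bullet> v = 0 \<Longrightarrow> n \<bullet> v = 0"
  shows "model_halfspace g e n = model_halfspace g e a \<or> model_halfspace g e n = model_halfspace g e (- a)"
proof -
  define c where "c = (n \<bullet> a) / (a \<bullet> a)"
  have "a \<bullet> (n - c *\<^sub>R a) = 0"
    using assms(1) by (simp add: c_def inner_diff_right inner_commute)
  then have "n \<bullet> (n - c *\<^sub>R a) = 0"
    by (rule assms(3))
  then have "(n - c *\<^sub>R a) \<bullet> (n - c *\<^sub>R a) = 0"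
    using \<open>a \<bullet> (n - c *\<^sub>R a) = 0\<close> by (simp add: inner_diff_left)
  then have n: "n = c *\<^sub>R a"
    by simp
  show ?thesis
  proof (cases "0 < c")
    case True
    then show ?thesis by (auto simp: n zero_le_mult_iff)
  next
    case False
    then have "c < 0" using assms(2) n by (cases "c = 0") auto
    then show ?thesis by (auto simp: n zero_le_mult_iff)
  qed
qed

definition unique_support_at :: "geom \<Rightarrow> 'a::euclidean_space \<Rightarrow> 'a set \<Rightarrow> 'a \<Rightarrow> 'a \<Rightarrow> bool" where
  "unique_support_at g e S x a \<longleftrightarrow>
     (\<forall>n. S \<subseteq> model_halfspace g e n \<longrightarrow> n \<bullet> x = 0 \<longrightarrow> (\<forall>v. a \<bullet> v = 0 \<longrightarrow> n \<bullet> v = 0))"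

lemma unique_support_at_mono:
  "unique_support_at g e S x a \<Longrightarrow> S \<subseteq> T \<Longrightarrow> unique_support_at g e T x a"
  unfolding unique_support_at_def by blast

lemma unique_support_at_uminus [simp]:
  "unique_support_at g e S x (- a) \<longleftrightarrow> unique_support_at g e S x a"
  by (simp add: unique_support_at_def)

lemma unique_support_at_interior:
  assumes "x \<in> (top_of_set (model_hyperplane g e a)) interior_of S"
  shows "unique_support_at g e S x a"
  unfolding unique_support_at_def
proof (intro allI impI)
  fix n v assume n: "S \<subseteq> model_halfspace g e n" "n \<bullet> x = 0" and v: "a \<bullet> v = 0"
  obtain V where V: "openin (top_of_set (model_hyperplane g e a)) V" "x \<in> V" "V \<subseteq> S"
    using assms unfolding interior_of_def by blast
  obtain W where W: "open W" "V = model_hyperplane g e a \<inter> W"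
    using V(1) openin_open by blast
  show "n \<bullet> v = 0"
    using normal_vanishes_if_locally_supporting[of x g e a n W v] V W n v by auto
qed

lemma exists_unique_support_point:
  assumes "S \<noteq> {}" "S \<subseteq> model g e" "span S = {x. a \<bullet> x = 0}"
  obtains p where "p \<in> model g e" "\<And>n. S \<subseteq> model_halfspace g e n \<Longrightarrow> 0 \<le> n \<bullet> p"
    "unique_support_at g e S p a"
proof -
  obtain B where B: "B \<subseteq> S" "independent B" "S \<subseteq> span B"
    using maximal_independent_subset by blast
  have "finite B"
    using B(2) by (rule finiteI_independent)
  moreover have "B \<noteq> {}"
  proof
    assume "B = {}"
    then have "S \<subseteq> {0}"
      using B(3) by simp
    then show False
      using assms(1,2) zero_notin_model[of g e] by blast
  qed
  ultimately have m: "\<Sum>B \<in> model_cone g e"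
    using B assms(2) by (intro sum_in_model_cone) auto
  define p where "p = radial_proj g e (\<Sum>B)"
  have nonneg: "0 \<le> n \<bullet> b" if "S \<subseteq> model_halfspace g e n" "b \<in> B" for n b
    using that B(1) by auto
  have np: "n \<bullet> p = (\<Sum>b\<in>B. n \<bullet> b) / model_gauge g e (\<Sum>B)" for n
    by (simp add: p_def radial_proj_def inner_sum_right divide_inverse mult.commute)
  have "0 \<le> n \<bullet> p" if "S \<subseteq> model_halfspace g e n" for n
    unfolding np using nonneg[OF that] model_gauge_pos[OF m] by (simp add: sum_nonneg)
  moreover have "unique_support_at g e S p a"
    unfolding unique_support_at_def
  proof (intro allI impI)
    fix n v assume n: "S \<subseteq> model_halfspace g e n" "n \<bullet> p = 0" and v: "a \<bullet> v = 0"
    have "(\<Sum>b\<in>B. n \<bullet> b) = 0"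
      using n(2) model_gauge_pos[OF m] unfolding np by simp
    then have "B \<subseteq> {v. n \<bullet> v = 0}"
      using nonneg[OF n(1)] \<open>finite B\<close> by (auto simp: sum_nonneg_eq_0_iff)
    then have "span S \<subseteq> {v. n \<bullet> v = 0}"
      using B(3) by (metis span_minimal span_mono span_span subspace_hyperplane subset_trans)
    then show "n \<bullet> v = 0"
      using v assms(3) by auto
  qed
  ultimately show ?thesis
    using that radial_proj_in_model[OF m] by (auto simp: p_def)
qed

definition polyhedron_presentation ::
    "geom \<Rightarrow> 'a::euclidean_space \<Rightarrow> ('a set \<times> 'a set) set \<Rightarrow> 'a set \<Rightarrow> bool" where
  "polyhedron_presentation g e F P \<longleftrightarrow>
     (\<forall>(H, Z) \<in> F. halfspace_of g e H Z) \<and> locfin_family g e (fst ` F) \<and>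
     P = model g e \<inter> \<Inter>(snd ` F)"

lemma polyhedron_presentation:
  assumes "polyhedron_g g e P"
  obtains F where "polyhedron_presentation g e F P"
  using assms unfolding polyhedron_g_def polyhedron_presentation_def by blast

lemma presentation_normal:
  assumes "polyhedron_presentation g e F P" "(H, Z) \<in> F"
  obtains a where "a \<noteq> 0" "H = model_hyperplane g e a" "Z = model_halfspace g e a"
    "P \<subseteq> model_halfspace g e a"
proof -
  obtain a where "a \<noteq> 0" "H = model_hyperplane g e a" "Z = model_halfspace g e a"
    using assms unfolding polyhedron_presentation_def halfspace_of_iff by blast
  moreover have "P \<subseteq> Z"
    using assms unfolding polyhedron_presentation_def by force
  ultimately show ?thesis using that by blast
qed

lemma locfin_family_avoid:
  assumes "locfin_family g e Fs" "\<And>A. A \<in> Fs \<Longrightarrow> closed A" "x \<in> model g e"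
  obtains \<delta> where "0 < \<delta>" "\<And>A. A \<in> Fs \<Longrightarrow> x \<notin> A \<Longrightarrow> A \<inter> ball x \<delta> = {}"
proof -
  obtain \<epsilon> where \<epsilon>: "0 < \<epsilon>" "finite {A \<in> Fs. A \<inter> ball x \<epsilon> \<noteq> {}}"
    using assms(1,3) unfolding locfin_family_def by blast
  define N where "N = {A \<in> Fs. A \<inter> ball x \<epsilon> \<noteq> {} \<and> x \<notin> A}"
  have "finite N"
    using \<epsilon>(2) by (rule rev_finite_subset) (auto simp: N_def)
  then have "closed (\<Union>N)"
    using assms(2) by (intro closed_Union) (auto simp: N_def)
  then have "open (- \<Union>N)"
    by (rule open_Compl)
  moreover have "x \<in> - \<Union>N"
    by (auto simp: N_def)
  ultimately obtain \<rho> where \<rho>: "0 < \<rho>" "ball x \<rho> \<subseteq> - \<Union>N"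
    using open_contains_ball by blast
  show ?thesis
  proof (rule that[of "min \<epsilon> \<rho>"])
    fix A assume A: "A \<in> Fs" "x \<notin> A"
    show "A \<inter> ball x (min \<epsilon> \<rho>) = {}"
    proof (cases "A \<inter> ball x \<epsilon> = {}")
      case False
      then have "A \<in> N"
        using A by (simp add: N_def)
      then show ?thesis
        using \<rho>(2) by auto
    qed auto
  qed (use \<epsilon> \<rho> in simp)
qed

lemma model_ball_same_side:
  assumes "x \<in> model g e" "0 < \<delta>\<^sub>0"
  obtains \<delta> where "0 < \<delta>"
    "\<And>a y. model_hyperplane g e a \<inter> ball x \<delta>\<^sub>0 = {} \<Longrightarrow> 0 < a \<bullet> x \<Longrightarrow>
       y \<in> model g e \<inter> ball x \<delta> \<Longrightarrow> 0 < a \<bullet> y"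
proof -
  obtain \<delta> where \<delta>: "0 < \<delta>"
    "\<And>z. dist z x < \<delta> \<Longrightarrow> z \<in> model_cone g e \<and> radial_proj g e z \<in> ball x \<delta>\<^sub>0"
    using radial_proj_near[of x g e "ball x \<delta>\<^sub>0"] assms by auto
  have "0 < a \<bullet> y"
    if H: "model_hyperplane g e a \<inter> ball x \<delta>\<^sub>0 = {}" and a: "0 < a \<bullet> x"
      and y: "y \<in> model g e \<inter> ball x \<delta>" for a y
  proof (rule ccontr)
    assume "\<not> 0 < a \<bullet> y"
    then obtain z where z: "z \<in> closed_segment x y" "a \<bullet> z = 0"
      using connected_ivt_hyperplane[of "closed_segment x y" y x a 0] a by auto
    have "dist z x < \<delta>"
      using dist_in_closed_segment[OF z(1)] y by (simp add: dist_commute)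
    then have "radial_proj g e z \<in> model_hyperplane g e a \<inter> ball x \<delta>\<^sub>0"
      using \<delta>(2) z(2) by (simp add: radial_proj_in_model inner_radial_proj_sign)
    then show False
      using H by blast
  qed
  then show ?thesis
    using that \<delta>(1) by blast
qed

lemma presentation_locally_strict:
  assumes "polyhedron_presentation g e F P" "x \<in> P"
  obtains \<delta> where "0 < \<delta>" "\<And>H Z. (H, Z) \<in> F \<Longrightarrow> x \<notin> H \<Longrightarrow> model g e \<inter> ball x \<delta> \<subseteq> Z - H"
proof -
  have x: "x \<in> model g e" and lf: "locfin_family g e (fst ` F)"
    using assms unfolding polyhedron_presentation_def by auto
  have "closed H" if H: "H \<in> fst ` F" for H
  proof -
    obtain Z where "(H, Z) \<in> F"
      using H by (auto simp: image_iff)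
    then obtain a where "H = model_hyperplane g e a"
      using presentation_normal[OF assms(1)] by blast
    then show ?thesis
      by (simp add: closed_Int closed_model closed_hyperplane)
  qed
  then obtain \<delta>\<^sub>0 where \<delta>\<^sub>0: "0 < \<delta>\<^sub>0" "\<And>H. H \<in> fst ` F \<Longrightarrow> x \<notin> H \<Longrightarrow> H \<inter> ball x \<delta>\<^sub>0 = {}"
    using locfin_family_avoid[OF lf _ x] by blast
  obtain \<delta> where \<delta>: "0 < \<delta>"
    "\<And>a y. model_hyperplane g e a \<inter> ball x \<delta>\<^sub>0 = {} \<Longrightarrow> 0 < a \<bullet> x \<Longrightarrow>
       y \<in> model g e \<inter> ball x \<delta> \<Longrightarrow> 0 < a \<bullet> y"
    using model_ball_same_side[OF x \<delta>\<^sub>0(1)] by blast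
  have "model g e \<inter> ball x \<delta> \<subseteq> Z - H" if HZ: "(H, Z) \<in> F" "x \<notin> H" for H Z
  proof
    fix y assume y: "y \<in> model g e \<inter> ball x \<delta>"
    obtain a where a: "H = model_hyperplane g e a" "Z = model_halfspace g e a"
      "P \<subseteq> model_halfspace g e a"
      using presentation_normal[OF assms(1) HZ(1)] by blast
    have "0 < a \<bullet> x"
      using a HZ(2) assms(2) x by fastforce
    moreover have "H \<inter> ball x \<delta>\<^sub>0 = {}"
      using \<delta>\<^sub>0(2)[OF rev_image_eqI[OF HZ(1)] HZ(2)] by simp
    ultimately have "0 < a \<bullet> y"
      using \<delta>(2) a(1) y by blast
    then show "y \<in> Z - H"
      using a y by simp
  qed
  then show ?thesis
    using that \<delta>(1) by blast
qed

lemma int_X_presentation: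
  assumes "polyhedron_presentation g e F P"
  shows "int_X g e P = {y \<in> model g e. \<forall>(H, Z) \<in> F. y \<in> Z - H}"
proof (intro equalityI subsetI)
  fix y assume "y \<in> int_X g e P"
  then obtain V where V: "openin (top_of_set (model g e)) V" "y \<in> V" "V \<subseteq> P"
    unfolding int_X_def interior_of_def by blast
  obtain W where W: "open W" "V = model g e \<inter> W"
    using V(1) openin_open by blast
  have "y \<in> Z - H" if HZ: "(H, Z) \<in> F" for H Z
  proof -
    obtain a where a: "a \<noteq> 0" "H = model_hyperplane g e a" "Z = model_halfspace g e a"
      "P \<subseteq> model_halfspace g e a"
      using presentation_normal[OF assms HZ] by blast
    have "a \<bullet> y \<noteq> 0"
    proof
      assume "a \<bullet> y = 0"
      then obtain z where "z \<in> model g e \<inter> W" "0 < (- a) \<bullet> z"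
        using open_meets_positive_side[of y g e "- a" W] a(1) V(2) W by auto
      then show False
        using a(4) V(3) W(2) by auto
    qed
    then show ?thesis
      using a V(2,3) by auto
  qed
  then show "y \<in> {y \<in> model g e. \<forall>(H, Z) \<in> F. y \<in> Z - H}"
    using V W by auto
next
  fix y assume y: "y \<in> {y \<in> model g e. \<forall>(H, Z) \<in> F. y \<in> Z - H}"
  then have "y \<in> P"
    using assms unfolding polyhedron_presentation_def by auto
  then obtain \<delta> where \<delta>: "0 < \<delta>"
    "\<And>H Z. (H, Z) \<in> F \<Longrightarrow> y \<notin> H \<Longrightarrow> model g e \<inter> ball y \<delta> \<subseteq> Z - H"
    using presentation_locally_strict[OF assms] by blast
  have "model g e \<inter> ball y \<delta> \<subseteq> P"
    using assms y \<delta>(2) unfolding polyhedron_presentation_def by fastforce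
  then have "model g e \<inter> ball y \<delta> \<subseteq> int_X g e P"
    unfolding int_X_def by (rule interior_of_maximal) auto
  then show "y \<in> int_X g e P"
    using y \<delta>(1) by auto
qed

lemma thick_presentation:
  assumes "thick g e T"
  obtains F where "polyhedron_presentation g e F T"
  using assms unfolding thick_def by (blast elim: polyhedron_presentation)

lemma thick_subset_model: "thick g e T \<Longrightarrow> T \<subseteq> model g e"
  unfolding thick_def polyhedron_g_def by blast

lemma radial_proj_segment_in_int_X:
  assumes "polyhedron_presentation g e F P" "x \<in> P" "q \<in> int_X g e P" "0 < s" "s \<le> 1"
    and "x + s *\<^sub>R (q - x) \<in> model_cone g e"
  shows "radial_proj g e (x + s *\<^sub>R (q - x)) \<in> int_X g e P"
proof -
  let ?z = "x + s *\<^sub>R (q - x)"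
  have "radial_proj g e ?z \<in> Z - H" if HZ: "(H, Z) \<in> F" for H Z
  proof -
    obtain a where a: "H = model_hyperplane g e a" "Z = model_halfspace g e a"
      "P \<subseteq> model_halfspace g e a"
      using presentation_normal[OF assms(1) HZ] by blast
    have "q \<in> Z - H"
      using assms(3) HZ unfolding int_X_presentation[OF assms(1)] by blast
    then have "0 < (1 - s) * (a \<bullet> x) + s * (a \<bullet> q)"
      using a assms(2,4,5) by (intro add_nonneg_pos mult_nonneg_nonneg mult_pos_pos) auto
    also have "\<dots> = a \<bullet> ?z"
      by (simp add: inner_add_right inner_diff_right algebra_simps)
    finally show ?thesis
      using a assms(6) by (simp add: inner_radial_proj_sign radial_proj_in_model)
  qed
  then show ?thesis
    unfolding int_X_presentation[OF assms(1)] using radial_proj_in_model[OF assms(6)] by auto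
qed

lemma thick_subset_closure_int_X:
  assumes "thick g e T"
  shows "T \<subseteq> closure (int_X g e T)"
proof
  obtain F where F: "polyhedron_presentation g e F T"
    using assms by (rule thick_presentation)
  obtain q where q: "q \<in> int_X g e T"
    using assms unfolding thick_def by blast
  fix x assume x: "x \<in> T"
  show "x \<in> closure (int_X g e T)"
    unfolding closure_approachable
  proof (intro allI impI)
    fix r :: real assume "0 < r"
    moreover have "x \<in> model g e"
      using thick_subset_model assms x by blast
    ultimately obtain t where t: "0 < t" "\<And>s. \<bar>s\<bar> \<le> t \<Longrightarrow>
        x + s *\<^sub>R (q - x) \<in> model_cone g e \<and> radial_proj g e (x + s *\<^sub>R (q - x)) \<in> ball x r"
      using radial_proj_line[of x g e "ball x r" "q - x"] by auto
    define s where "s = min t 1"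
    have "0 < s" "s \<le> 1" "\<bar>s\<bar> \<le> t"
      using t(1) by (auto simp: s_def)
    then have "radial_proj g e (x + s *\<^sub>R (q - x)) \<in> int_X g e T \<inter> ball x r"
      using radial_proj_segment_in_int_X[OF F x q] t(2) by auto
    then show "\<exists>y \<in> int_X g e T. dist y x < r"
      by (auto simp: dist_commute)
  qed
qed

lemma thick_not_subset_hyperplane:
  assumes "thick g e T" "a \<noteq> 0"
  shows "\<not> T \<subseteq> model_hyperplane g e a"
proof
  assume sub: "T \<subseteq> model_hyperplane g e a"
  obtain w where "w \<in> int_X g e T"
    using assms(1) unfolding thick_def by blast
  moreover have "openin (top_of_set (model g e)) (int_X g e T)"
    unfolding int_X_def by simp
  ultimately obtain y where "y \<in> int_X g e T" "a \<bullet> y \<noteq> 0"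
    using openin_model_meets_off_hyperplane assms(2) by blast
  then show False
    using sub interior_of_subset[of _ T] unfolding int_X_def by blast
qed

lemma polyhedron_mem_if_supported:
  assumes "polyhedron_g g e T" "S \<subseteq> T" "p \<in> model g e"
    and "\<And>n. S \<subseteq> model_halfspace g e n \<Longrightarrow> 0 \<le> n \<bullet> p"
  shows "p \<in> T"
proof -
  obtain F where F: "polyhedron_presentation g e F T"
    using assms(1) by (rule polyhedron_presentation)
  have "p \<in> Z" if HZ: "(H, Z) \<in> F" for H Z
  proof -
    obtain a where "Z = model_halfspace g e a" "T \<subseteq> model_halfspace g e a"
      using presentation_normal[OF F HZ] by blast
    then show ?thesis
      using assms(2-4) by blast
  qed
  then show ?thesis
    using F assms(3) unfolding polyhedron_presentation_def by auto
qed

lemma thick_contains_halfball: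
  assumes "thick g e T" "x \<in> T" "a \<noteq> 0" "unique_support_at g e T x a"
    and "\<not> T \<subseteq> model_halfspace g e (- a)"
  shows "\<exists>\<delta>>0. model_halfspace g e a \<inter> ball x \<delta> \<subseteq> T"
proof -
  obtain F where F: "polyhedron_presentation g e F T"
    using assms(1) by (rule thick_presentation)
  obtain \<delta> where \<delta>: "0 < \<delta>"
    "\<And>H Z. (H, Z) \<in> F \<Longrightarrow> x \<notin> H \<Longrightarrow> model g e \<inter> ball x \<delta> \<subseteq> Z - H"
    using presentation_locally_strict[OF F assms(2)] by blast
  have "y \<in> Z" if y: "y \<in> model_halfspace g e a \<inter> ball x \<delta>" and HZ: "(H, Z) \<in> F" for y H Z
  proof (cases "x \<in> H")
    case True
    obtain n where n: "n \<noteq> 0" "H = model_hyperplane g e n" "Z = model_halfspace g e n"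
      "T \<subseteq> model_halfspace g e n"
      using presentation_normal[OF F HZ] by blast
    have "n \<bullet> v = 0" if "a \<bullet> v = 0" for v
      using assms(4) n(4) True n(2) that unfolding unique_support_at_def by blast
    then have "model_halfspace g e n = model_halfspace g e a \<or>
        model_halfspace g e n = model_halfspace g e (- a)"
      by (rule model_halfspace_eq_if_normal_parallel[OF assms(3) n(1)])
    then show ?thesis
      using n(3,4) assms(5) y by auto
  qed (use \<delta>(2) HZ y in blast)
  then have "model_halfspace g e a \<inter> ball x \<delta> \<subseteq> T"
    using F unfolding polyhedron_presentation_def by auto
  then show ?thesis
    using \<delta>(1) by blast
qed

lemma subset_model_hyperplane_iff:
  "T \<subseteq> model_hyperplane g e a \<longleftrightarrow> T \<subseteq> model_halfspace g e a \<and> T \<subseteq> model_halfspace g e (- a)"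
  unfolding subset_iff by (auto intro!: order.antisym)

lemma thick_not_subset_opposite:
  assumes "thick g e T" "a \<noteq> 0" "T \<subseteq> model_halfspace g e a"
  shows "\<not> T \<subseteq> model_halfspace g e (- a)"
  using thick_not_subset_hyperplane[OF assms(1,2)] assms(3) subset_model_hyperplane_iff[of T g e a]
  by blast

lemma model_halfspace_neq_uminus:
  assumes "x \<in> model_hyperplane g e a" "a \<noteq> 0"
  shows "model_halfspace g e a \<noteq> model_halfspace g e (- a)"
proof -
  obtain y where "y \<in> model g e" "0 < a \<bullet> y"
    using open_meets_positive_side[of x g e a UNIV] assms by auto
  then have "y \<in> model_halfspace g e a - model_halfspace g e (- a)"
    by auto
  then show ?thesis
    by blast
qed

lemma partial_tessellation_thick:
  "partial_tessellation g e \<T> \<Longrightarrow> T \<in> \<T> \<Longrightarrow> thick g e T"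
  unfolding partial_tessellation_def by blast

lemma partial_tessellation_disjoint:
  "partial_tessellation g e \<T> \<Longrightarrow> T \<in> \<T> \<Longrightarrow> T' \<in> \<T> \<Longrightarrow> T \<noteq> T' \<Longrightarrow>
     int_X g e T \<inter> int_X g e T' = {}"
  unfolding partial_tessellation_def by blast

lemma halfball_subset_int_X:
  assumes "model_halfspace g e a \<inter> ball x r \<subseteq> T"
  shows "model g e \<inter> (ball x r \<inter> {y. 0 < a \<bullet> y}) \<subseteq> int_X g e T"
  unfolding int_X_def using assms
  by (intro interior_of_maximal openin_open_Int open_Int open_halfspace_gt) auto

lemma tile_eq_if_common_halfball:
  assumes "partial_tessellation g e \<T>" "T \<in> \<T>" "T' \<in> \<T>"
    and "x \<in> model_hyperplane g e a" "a \<noteq> 0"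
    and "\<exists>\<delta>>0. model_halfspace g e a \<inter> ball x \<delta> \<subseteq> T"
    and "\<exists>\<delta>>0. model_halfspace g e a \<inter> ball x \<delta> \<subseteq> T'"
  shows "T = T'"
proof (rule ccontr)
  assume "T \<noteq> T'"
  obtain \<delta> \<delta>' where "0 < \<delta>" "model_halfspace g e a \<inter> ball x \<delta> \<subseteq> T"
    "0 < \<delta>'" "model_halfspace g e a \<inter> ball x \<delta>' \<subseteq> T'"
    using assms(6,7) by blast
  then have r: "0 < min \<delta> \<delta>'" "model_halfspace g e a \<inter> ball x (min \<delta> \<delta>') \<subseteq> T"
    "model_halfspace g e a \<inter> ball x (min \<delta> \<delta>') \<subseteq> T'"
    by auto
  obtain y where "y \<in> model g e \<inter> ball x (min \<delta> \<delta>')" "0 < a \<bullet> y"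
    using open_meets_positive_side[of x g e a "ball x (min \<delta> \<delta>')"] assms(4,5) r(1) by auto
  then have "y \<in> int_X g e T \<inter> int_X g e T'"
    using halfball_subset_int_X[OF r(2)] halfball_subset_int_X[OF r(3)] by blast
  then show False
    using partial_tessellation_disjoint[OF assms(1-3) \<open>T \<noteq> T'\<close>] by blast
qed

lemma not_mem_tile_between_halfballs:
  assumes "partial_tessellation g e \<T>" "T \<in> \<T>" "T1 \<in> \<T>" "T2 \<in> \<T>" "T \<noteq> T1" "T \<noteq> T2"
    and "a \<noteq> 0" "0 < r"
    and "model_halfspace g e a \<inter> ball x r \<subseteq> T1" "model_halfspace g e (- a) \<inter> ball x r \<subseteq> T2"
  shows "x \<notin> T"
proof
  assume "x \<in> T"
  have disjoint: "int_X g e T \<inter> int_X g e T1 = {}" "int_X g e T \<inter> int_X g e T2 = {}"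
    using partial_tessellation_disjoint assms(1-6) by metis+
  have "x \<in> closure (int_X g e T)"
    using \<open>x \<in> T\<close> thick_subset_closure_int_X[OF partial_tessellation_thick[OF assms(1,2)]] by blast
  then obtain w where w: "w \<in> int_X g e T \<inter> ball x r"
    using assms(8) unfolding closure_approachable by (auto simp: dist_commute)
  have V: "openin (top_of_set (model g e)) (int_X g e T \<inter> ball x r)"
    unfolding int_X_def by (intro openin_Int_open) auto
  obtain z where z: "z \<in> int_X g e T \<inter> ball x r" "a \<bullet> z \<noteq> 0"
    using openin_model_meets_off_hyperplane[OF V w assms(7)] by blast
  have "z \<in> model g e"
    using openin_subset[OF V] z(1) by auto
  consider "0 < a \<bullet> z" | "0 < (- a) \<bullet> z"
    using z(2) by (cases "0 < a \<bullet> z") auto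
  then show False
  proof cases
    case 1
    then have "z \<in> int_X g e T1"
      using halfball_subset_int_X[OF assms(9)] z(1) \<open>z \<in> model g e\<close> by blast
    then show False
      using disjoint(1) z(1) by blast
  next
    case 2
    then have "z \<in> int_X g e T2"
      using halfball_subset_int_X[OF assms(10)] z(1) \<open>z \<in> model g e\<close> by blast
    then show False
      using disjoint(2) z(1) by blast
  qed
qed

lemma tiles_on_opposite_sides:
  assumes "partial_tessellation g e \<T>" "T1 \<in> \<T>" "T2 \<in> \<T>" "T1 \<noteq> T2"
    and "a \<noteq> 0" "p \<in> T1" "p \<in> T2" "a \<bullet> p = 0"
    and "unique_support_at g e T1 p a" "unique_support_at g e T2 p a"
  obtains b where "b = a \<or> b = - a" "T1 \<subseteq> model_halfspace g e b" "T2 \<subseteq> model_halfspace g e (- b)"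
proof -
  have thick: "thick g e T1" "thick g e T2"
    using partial_tessellation_thick[OF assms(1)] assms(2,3) by blast+
  have b: "b \<noteq> 0" "p \<in> model_hyperplane g e b"
    "unique_support_at g e T1 p b" "unique_support_at g e T2 p b"
    if "b = a \<or> b = - a" for b
    using that assms(5,6,8-10) thick_subset_model[OF thick(1)] by auto
  have halfball: "\<exists>\<delta>>0. model_halfspace g e b \<inter> ball p \<delta> \<subseteq> T"
    if T: "T = T1 \<or> T = T2" and b_cases: "b = a \<or> b = - a"
      and not_below: "\<not> T \<subseteq> model_halfspace g e (- b)" for T b
  proof -
    have "thick g e T" "p \<in> T" "unique_support_at g e T p b"
      using T thick assms(6,7) b(3,4)[OF b_cases] by auto
    then show ?thesis
      using thick_contains_halfball b(1)[OF b_cases] not_below by blast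
  qed
  have sides: "T1 \<subseteq> model_halfspace g e b \<and> T2 \<subseteq> model_halfspace g e (- b)"
    if b_cases: "b = a \<or> b = - a" and T1: "\<not> T1 \<subseteq> model_halfspace g e (- b)" for b
  proof -
    have b_cases': "- b = a \<or> - b = - a"
      using b_cases by auto
    have T2: "T2 \<subseteq> model_halfspace g e (- b)"
      using halfball[of T1 b] halfball[of T2 b] b_cases T1
        tile_eq_if_common_halfball[OF assms(1-3) b(2,1)[OF b_cases]] assms(4) by blast
    then have "\<not> T2 \<subseteq> model_halfspace g e (- (- b))"
      by (rule thick_not_subset_opposite[OF thick(2) b(1)[OF b_cases']])
    then have "T1 \<subseteq> model_halfspace g e (- (- b))"
      using halfball[of T1 "- b"] halfball[of T2 "- b"] b_cases'
        tile_eq_if_common_halfball[OF assms(1-3) b(2,1)[OF b_cases']] assms(4) by blast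
    with T2 show ?thesis
      by simp
  qed
  have "\<not> T1 \<subseteq> model_halfspace g e (- a) \<or> \<not> T1 \<subseteq> model_halfspace g e a"
    using thick_not_subset_hyperplane[OF thick(1) assms(5)] subset_model_hyperplane_iff[of T1 g e a]
    by blast
  then show ?thesis
  proof
    assume "\<not> T1 \<subseteq> model_halfspace g e (- a)"
    then show ?thesis
      using sides[of a] that[of a] by blast
  next
    assume "\<not> T1 \<subseteq> model_halfspace g e a"
    then show ?thesis
      using sides[of "- a"] that[of "- a"] by simp
  qed
qed

lemma essential_hyperplane_if_halfball:
  assumes "ghyperplane g e H" "H = model_hyperplane g e a" "a \<noteq> 0" "T \<subseteq> model_halfspace g e a"
    and "p \<in> H" "0 < \<delta>" "H \<inter> ball p \<delta> \<subseteq> T"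
  shows "essential_hyperplane g e T H"
proof -
  have "H \<inter> ball p \<delta> \<subseteq> (top_of_set H) interior_of (T \<inter> H)"
    using assms(7) by (intro interior_of_maximal) auto
  then have "(top_of_set H) interior_of (T \<inter> H) \<noteq> {}"
    using assms(5,6) by auto
  moreover have "halfspace_of g e H (model_halfspace g e a)"
    using assms(1-3) halfspace_of_iff by blast
  ultimately show ?thesis
    unfolding essential_hyperplane_def using assms(4) by blast
qed

lemma halfballs_at_common_point:
  assumes "thick g e T1" "thick g e T2" "a \<noteq> 0" "x \<in> T1" "x \<in> T2"
    and "unique_support_at g e T1 x a" "unique_support_at g e T2 x a"
    and "T1 \<subseteq> model_halfspace g e a" "T2 \<subseteq> model_halfspace g e (- a)"
  obtains \<delta> where "0 < \<delta>" "model_halfspace g e a \<inter> ball x \<delta> \<subseteq> T1"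
    "model_halfspace g e (- a) \<inter> ball x \<delta> \<subseteq> T2"
proof -
  have "- a \<noteq> 0"
    using assms(3) by simp
  obtain \<delta>\<^sub>1 where \<delta>\<^sub>1: "0 < \<delta>\<^sub>1" "model_halfspace g e a \<inter> ball x \<delta>\<^sub>1 \<subseteq> T1"
    using thick_contains_halfball[OF assms(1,4,3,6) thick_not_subset_opposite[OF assms(1,3,8)]]
    by blast
  have "unique_support_at g e T2 x (- a)"
    using assms(7) by simp
  then obtain \<delta>\<^sub>2 where \<delta>\<^sub>2: "0 < \<delta>\<^sub>2" "model_halfspace g e (- a) \<inter> ball x \<delta>\<^sub>2 \<subseteq> T2"
    using thick_contains_halfball[OF assms(2,5) \<open>- a \<noteq> 0\<close> _
        thick_not_subset_opposite[OF assms(2) \<open>- a \<noteq> 0\<close> assms(9)]]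
    by blast
  have "model_halfspace g e a \<inter> ball x (min \<delta>\<^sub>1 \<delta>\<^sub>2) \<subseteq> T1"
    "model_halfspace g e (- a) \<inter> ball x (min \<delta>\<^sub>1 \<delta>\<^sub>2) \<subseteq> T2"
    using \<delta>\<^sub>1(2) \<delta>\<^sub>2(2) by auto
  then show ?thesis
    using that[of "min \<delta>\<^sub>1 \<delta>\<^sub>2"] \<delta>\<^sub>1(1) \<delta>\<^sub>2(1) by simp
qed

lemma relint_disjoint_other_tiles:
  assumes "partial_tessellation g e \<T>" "T \<in> \<T>" "T1 \<in> \<T>" "T2 \<in> \<T>" "T \<noteq> T1" "T \<noteq> T2"
    and "a \<noteq> 0" "gspan g e (T1 \<inter> T2) = model_hyperplane g e a"
    and "T1 \<subseteq> model_halfspace g e a" "T2 \<subseteq> model_halfspace g e (- a)"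
  shows "relint_g g e (T1 \<inter> T2) \<inter> T = {}"
proof -
  have "x \<notin> T" if "x \<in> relint_g g e (T1 \<inter> T2)" for x
  proof -
    have relint: "x \<in> top_of_set (model_hyperplane g e a) interior_of (T1 \<inter> T2)"
      using that unfolding relint_g_def assms(8) .
    have x: "x \<in> T1" "x \<in> T2"
      using subsetD[OF interior_of_subset relint] by auto
    have "unique_support_at g e (T1 \<inter> T2) x a"
      using relint by (rule unique_support_at_interior)
    then have "unique_support_at g e T1 x a" "unique_support_at g e T2 x a"
      by (auto elim: unique_support_at_mono)
    then obtain \<delta> where "0 < \<delta>" "model_halfspace g e a \<inter> ball x \<delta> \<subseteq> T1"
      "model_halfspace g e (- a) \<inter> ball x \<delta> \<subseteq> T2"
      using halfballs_at_common_point partial_tessellation_thick assms(1,3,4,7,9,10) x by metis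
    then show "x \<notin> T"
      by (rule not_mem_tile_between_halfballs[OF assms(1-7)])
  qed
  then show ?thesis
    by blast
qed

lemma exists_common_unique_support_point:
  assumes "thick g e T1" "thick g e T2" "T1 \<inter> T2 \<noteq> {}" "span (T1 \<inter> T2) = {x. a \<bullet> x = 0}"
  obtains p where "p \<in> T1" "p \<in> T2" "a \<bullet> p = 0"
    "unique_support_at g e T1 p a" "unique_support_at g e T2 p a"
proof -
  have S: "T1 \<inter> T2 \<noteq> {}" "T1 \<inter> T2 \<subseteq> model g e"
    using assms(1,3) thick_subset_model by auto
  obtain p where p: "p \<in> model g e" "\<And>n. T1 \<inter> T2 \<subseteq> model_halfspace g e n \<Longrightarrow> 0 \<le> n \<bullet> p"
    "unique_support_at g e (T1 \<inter> T2) p a"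
    using exists_unique_support_point[OF S assms(4)] by blast
  have "p \<in> T1" "p \<in> T2"
    using polyhedron_mem_if_supported[OF _ _ p(1,2)] assms(1,2) unfolding thick_def by auto
  moreover have "a \<bullet> p = 0"
    using calculation assms(4) span_base[of p "T1 \<inter> T2"] by auto
  moreover have "unique_support_at g e T1 p a" "unique_support_at g e T2 p a"
    using unique_support_at_mono[OF p(3)] by auto
  ultimately show ?thesis
    using that by blast
qed

lemma common_facet:
  assumes "partial_tessellation g e \<T>" "T1 \<in> \<T>" "T2 \<in> \<T>"
    and "T1 \<inter> T2 \<noteq> {}" "set_codim g e (T1 \<inter> T2) = 1"
  obtains a p \<delta> where "ghyperplane g e (gspan g e (T1 \<inter> T2))" "a \<noteq> 0"
    "gspan g e (T1 \<inter> T2) = model_hyperplane g e a"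
    "T1 \<subseteq> model_halfspace g e a" "T2 \<subseteq> model_halfspace g e (- a)"
    "p \<in> model_hyperplane g e a" "0 < \<delta>" "model_hyperplane g e a \<inter> ball p \<delta> \<subseteq> T1 \<inter> T2"
proof -
  have thick: "thick g e T1" "thick g e T2"
    using partial_tessellation_thick[OF assms(1)] assms(2,3) by blast+
  then have "T1 \<inter> T2 \<subseteq> model g e"
    using thick_subset_model by blast
  then obtain a where hyp: "ghyperplane g e (gspan g e (T1 \<inter> T2))" and a: "a \<noteq> 0"
    "gspan g e (T1 \<inter> T2) = model_hyperplane g e a" "span (T1 \<inter> T2) = {x. a \<bullet> x = 0}"
    using set_codim_eq_1_normal assms(4,5) by metis
  obtain p where p: "p \<in> T1" "p \<in> T2" "a \<bullet> p = 0"
    and us: "unique_support_at g e T1 p a" "unique_support_at g e T2 p a"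
    using exists_common_unique_support_point[OF thick assms(4) a(3)] by blast
  have "T1 \<inter> T2 \<subseteq> model_hyperplane g e a"
    unfolding a(2)[symmetric] gspan_def by blast
  then have "T1 \<noteq> T2"
    using thick_not_subset_hyperplane[OF thick(1) a(1)] by auto
  then obtain b where b: "b = a \<or> b = - a" "T1 \<subseteq> model_halfspace g e b"
    "T2 \<subseteq> model_halfspace g e (- b)"
    using tiles_on_opposite_sides[OF assms(1-3) _ a(1) p us] by blast
  have b0: "b \<noteq> 0" and Hb: "gspan g e (T1 \<inter> T2) = model_hyperplane g e b" and "b \<bullet> p = 0"
    using b(1) a(1,2) p(3) by (elim disjE; simp)+
  have "unique_support_at g e T1 p b" "unique_support_at g e T2 p b"
    using b(1) us by (elim disjE; simp)+
  then obtain \<delta> where \<delta>: "0 < \<delta>" "model_halfspace g e b \<inter> ball p \<delta> \<subseteq> T1"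
      "model_halfspace g e (- b) \<inter> ball p \<delta> \<subseteq> T2"
    using halfballs_at_common_point[OF thick b0 p(1,2) _ _ b(2,3)] by blast
  then have "model_hyperplane g e b \<inter> ball p \<delta> \<subseteq> T1 \<inter> T2"
    by auto
  moreover have "p \<in> model_hyperplane g e b"
    using p(1) \<open>b \<bullet> p = 0\<close> thick_subset_model[OF thick(1)] by auto
  ultimately show ?thesis
    using that[OF hyp b0 Hb b(2,3)] \<delta>(1) by blast
qed

theorem lemma4p3:
  fixes g :: geom and e :: "'a::euclidean_space" and \<T> :: "'a set set"
    and T1 T2 :: "'a set"
  assumes "DIM('a) \<ge> 2" and "norm e = 1"
    and "partial_tessellation g e \<T>" and "locally_finite_tess g e \<T>"
    and "T1 \<in> \<T>" and "T2 \<in> \<T>"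
    and "T1 \<inter> T2 \<noteq> {}" and "set_codim g e (T1 \<inter> T2) = 1"
  shows "essential_hyperplane g e T1 (gspan g e (T1 \<inter> T2))
       \<and> essential_hyperplane g e T2 (gspan g e (T1 \<inter> T2))
       \<and> (\<exists>Z1 Z2. halfspace_of g e (gspan g e (T1 \<inter> T2)) Z1
               \<and> halfspace_of g e (gspan g e (T1 \<inter> T2)) Z2
               \<and> Z1 \<noteq> Z2 \<and> T1 \<subseteq> Z1 \<and> T2 \<subseteq> Z2)
       \<and> (\<forall>T \<in> \<T>. T \<noteq> T1 \<and> T \<noteq> T2 \<longrightarrow> relint_g g e (T1 \<inter> T2) \<inter> T = {})
       \<and> side g e \<T> (T1 \<inter> T2)"
proof -
  let ?H = "gspan g e (T1 \<inter> T2)"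
  obtain a p \<delta> where hyp: "ghyperplane g e ?H" and a: "a \<noteq> 0" "?H = model_hyperplane g e a"
    and T: "T1 \<subseteq> model_halfspace g e a" "T2 \<subseteq> model_halfspace g e (- a)"
    and p: "p \<in> model_hyperplane g e a" "0 < \<delta>" "model_hyperplane g e a \<inter> ball p \<delta> \<subseteq> T1 \<inter> T2"
    using common_facet[OF assms(3,5-8)] by blast
  have a': "- a \<noteq> 0" "?H = model_hyperplane g e (- a)"
    using a by simp_all
  have "essential_hyperplane g e T1 ?H" "essential_hyperplane g e T2 ?H"
    using essential_hyperplane_if_halfball[OF hyp a(2,1) T(1)]
      essential_hyperplane_if_halfball[OF hyp a'(2,1) T(2)] p a(2) by auto
  moreover have "halfspace_of g e ?H (model_halfspace g e a)"
    using hyp a unfolding halfspace_of_iff by blast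
  moreover have "halfspace_of g e ?H (model_halfspace g e (- a))"
    using hyp a' unfolding halfspace_of_iff by blast
  moreover have "model_halfspace g e a \<noteq> model_halfspace g e (- a)"
    using model_halfspace_neq_uminus[OF p(1) a(1)] .
  moreover have relint: "\<forall>T \<in> \<T>. T \<noteq> T1 \<and> T \<noteq> T2 \<longrightarrow> relint_g g e (T1 \<inter> T2) \<inter> T = {}"
    using relint_disjoint_other_tiles[OF assms(3) _ assms(5,6) _ _ a T] by blast
  moreover have "side g e \<T> (T1 \<inter> T2)"
    unfolding side_def cell_def
    using assms(5-8) relint by (auto intro!: exI[of _ "{T1, T2}"])
  ultimately show ?thesis
    using T by blast
qed

end
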